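(* Fix a prompt $q$, constants $\beta>0$, $\varepsilon>0$, and assume $1-\rho^+(q)-\rho^-(q)>0$ and $0<p_{\mathrm{ref}}(q)<1$. Let $(\pi_k)_{k\ge0}$ be a sequence of policies such that, for each $k\ge1$, $\pi_k(\cdot\mid q)$ is the maximizer over all distributions $\pi(\cdot\mid q)$ on $\mathcal O$ of \[ \frac{(1-\rho^+(q)-\rho^-(q))\,\bigl(p_\pi(q)-p_{\pi_{k-1}}(q)\bigr)}{\sqrt{\mu_{\pi_{k-1}}(q)(1-\mu_{\pi_{k-1}}(q))+\varepsilon}}-\beta\,\mathrm{KL}\bigl(\pi(\cdot\mid q)\,\|\,\pi_{\mathrm{ref}}(\cdot\mid q)\bigr). \] Then for all $k\ge1$, $p_{\pi_k}(q)=\tilde h_{\varepsilon,\mathrm{ref}}(p_{\pi_{k-1}}(q))$, where \[ \tilde h_{\varepsilon,\mathrm{ref}}(p)=\frac{1}{1+\frac{1-p_{\mathrm{ref}}(q)}{p_{\mathrm{ref}}(q)}\exp\!\Bigl(-\frac{1-\rho^+(q)-\rho^-(q)}{\beta\sqrt{F(p)(1-F(p))+\varepsilon}}\Bigr)},\qquad F(p)=\rho^+(q)+(1-\rho^+(q)-\rho^-(q))\,p . \] Moreover, if in addition $\rho^+(q)+\rho^-(q)>0$, then $\tilde h_{\varepsilon,\mathrm{ref}}(p)<h_{\varepsilon,\mathrm{ref}}(p)$ for all $p\in[0,1]$, where \[ h_{\varepsilon,\mathrm{ref}}(p)=\frac{1}{1+\frac{1-p_{\mathrm{ref}}(q)}{p_{\mathrm{ref}}(q)}\exp\!\Bigl(-\frac{1}{\beta\sqrt{p(1-p)+\varepsilon}}\Bigr)}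 \] is the corresponding noiseless map; consequently the largest fixed point of $\tilde h_{\varepsilon,\mathrm{ref}}$ in $[0,1]$ is strictly smaller than the largest fixed point of $h_{\varepsilon,\mathrm{ref}}$ in $[0,1]$.
   Context: Setting: $\mathcal O$ is a countable set of responses; $r^*:\mathcal Q\times\mathcal O\to\{0,1\}$ is the true binary reward; a policy gives a distribution $\pi(\cdot\mid q)$ on $\mathcal O$; $p_\pi(q)=\mathbb E_{o\sim\pi(\cdot\mid q)}[r^*(q,o)]$. $\pi_{\mathrm{ref}}$ is a fixed reference policy and $p_{\mathrm{ref}}(q)=p_{\pi_{\mathrm{ref}}}(q)$. $\mathrm{KL}$ is the Kullback–Leibler divergence. Flip rates $\rho^+(q),\rho^-(q)\in[0,1]$ are the probabilities that a true reward $0$ is observed as $1$, respectively a true reward $1$ is observed as $0$. $\mu_{\pi}(q)=\rho^+(q)+(1-\rho^+(q)-\rho^-(q))\,p_{\pi}(q)$ is the mean observed (noisy) reward under $\pi$. *)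

theory Defs
  imports "HOL-Probability.Probability"
begin

text \<open>Policies at a prompt are probability mass functions on a countable response type.\<close>

definition succ_prob :: "('q \<Rightarrow> 'o \<Rightarrow> bool) \<Rightarrow> 'q \<Rightarrow> 'o pmf \<Rightarrow> real" where
  "succ_prob r q P = measure_pmf.expectation P (\<lambda>y. of_bool (r q y))"

definition noisy_mean :: "real \<Rightarrow> real \<Rightarrow> real \<Rightarrow> real" where
  "noisy_mean rp rm p = rp + (1 - rp - rm) * p"

definition KL_pmf :: "'o pmf \<Rightarrow> 'o pmf \<Rightarrow> ereal" where
  "KL_pmf P R =
     (if (\<exists>y. pmf P y > 0 \<and> pmf R y = 0) then \<infinity>
      else if (\<lambda>y. pmf P y * ln (pmf P y / pmf R y)) summable_on UNIV
        then ereal (\<Sum>\<^sub>\<infinity>y. pmf P y * ln (pmf P y / pmf R y))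
      else \<infinity>)"

definition h_noisy :: "real \<Rightarrow> real \<Rightarrow> real \<Rightarrow> real \<Rightarrow> real \<Rightarrow> real \<Rightarrow> real" where
  "h_noisy rp rm beta eps pref p =
     1 / (1 + (1 - pref) / pref *
        exp (- (1 - rp - rm) / (beta * sqrt (noisy_mean rp rm p * (1 - noisy_mean rp rm p) + eps))))"

definition h_clean :: "real \<Rightarrow> real \<Rightarrow> real \<Rightarrow> real \<Rightarrow> real" where
  "h_clean beta eps pref p =
     1 / (1 + (1 - pref) / pref * exp (- 1 / (beta * sqrt (p * (1 - p) + eps))))"

end

theory Submission
  imports Defs
begin

(* The objective is affine in P(A), A = {y. r q y}, minus beta KL(P || pi_ref). For the Gibbs
   tilt T of pi_ref, with density proportional to exp (C / beta) on A and to 1 off A, the chain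
   rule KL(P || pi_ref) = KL(P || T) + E_P ln (dT / dpi_ref) turns the objective into a constant
   minus beta KL(P || T); so T is the unique maximiser, and its mass on A is the logistic
   expression h_noisy.
   Noise only shrinks the effective step: with g = 1 - rho+ - rho- in (0, 1) and mu = rho+ + g p,
     mu (1 - mu) = g^2 p (1 - p) + rho+ rho- + g (rho+ (1 - p) + rho- p),
   so g / sqrt (mu (1 - mu) + eps) < 1 / sqrt (p (1 - p) + eps) and h_noisy < h_clean on [0, 1].
   Both maps are continuous self-maps of [0, 1] and have greatest fixed points; at the greatest
   fixed point pt of h_noisy we have h_clean pt > pt, so the intermediate value theorem yields a
   fixed point of h_clean above pt. *)

lemma has_sum_diff:
  fixes f g :: "'a \<Rightarrow> 'b::topological_ab_group_add"
  assumes "(f has_sum a) A" "(g has_sum b) A"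
  shows "((\<lambda>x. f x - g x) has_sum (a - b)) A"
proof -
  have "((\<lambda>x. - g x) has_sum - b) A" using assms(2) by (simp add: has_sum_uminus)
  from has_sum_add[OF assms(1) this] show ?thesis by simp
qed

lemma has_sum_pmf: "(pmf P has_sum measure_pmf.prob P A) A"
proof -
  have "Infinite_Set_Sum.abs_summable_on (pmf P) A" by (rule pmf_abs_summable)
  then have "(pmf P has_sum infsetsum (pmf P) A) A"
    by (metis abs_summable_equivalent abs_summable_summable has_sum_infsum infsetsum_infsum)
  then show ?thesis by (simp add: measure_pmf_conv_infsetsum)
qed

lemma has_sum_pmf_indicator:
  "((\<lambda>y. pmf P y * of_bool (y \<in> A)) has_sum measure_pmf.prob P A) UNIV"
  using has_sum_pmf[of P A] by (subst has_sum_cong_neutral[where T = A]) auto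

lemma has_sum_pmf_UNIV: "(pmf P has_sum 1) UNIV"
  using has_sum_pmf[of P UNIV] by simp

lemma has_sum_pmf_step:
  "((\<lambda>y. pmf P y * (if y \<in> A then u else v)) has_sum
     (measure_pmf.prob P A * u + (1 - measure_pmf.prob P A) * v)) UNIV"
proof -
  have "((\<lambda>y. v * pmf P y + (u - v) * (pmf P y * of_bool (y \<in> A))) has_sum
          (v * 1 + (u - v) * measure_pmf.prob P A)) UNIV"
    by (intro has_sum_add has_sum_cmult_right has_sum_pmf_UNIV has_sum_pmf_indicator)
  moreover have "(\<lambda>y. v * pmf P y + (u - v) * (pmf P y * of_bool (y \<in> A)))
      = (\<lambda>y. pmf P y * (if y \<in> A then u else v))"
    by (auto simp: algebra_simps)
  ultimately show ?thesis by (simp add: algebra_simps)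
qed

lemma succ_prob_eq_prob: "succ_prob r q P = measure_pmf.prob P {y. r q y}"
proof -
  have "(\<lambda>y. of_bool (r q y) :: real) = indicator {y. r q y}" by (auto simp: indicator_def)
  then show ?thesis unfolding succ_prob_def by simp
qed

section \<open>Gibbs variational principle\<close>

lemma KL_term_eq:
  fixes p s :: real
  assumes "0 < p" "0 < s"
  shows "s - p + p * ln (p / s) = p * (s / p - 1 - ln (s / p))"
  using assms by (simp add: ln_div field_simps)

lemma KL_term_nonneg:
  fixes p s :: real
  assumes "0 \<le> p" "0 \<le> s" "0 < p \<Longrightarrow> 0 < s"
  shows "0 \<le> s - p + p * ln (p / s)"
proof (cases "p = 0")
  case False
  with assms have "0 < p" "0 < s" by auto
  moreover have "ln (s / p) \<le> s / p - 1"
    using \<open>0 < p\<close> \<open>0 < s\<close> by (simp add: ln_le_minus_one)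
  ultimately show ?thesis by (simp add: KL_term_eq)
qed (use assms in simp)

lemma KL_term_eq_0_iff:
  fixes p s :: real
  assumes "0 \<le> p" "0 \<le> s" "0 < p \<Longrightarrow> 0 < s"
  shows "s - p + p * ln (p / s) = 0 \<longleftrightarrow> p = s"
proof (cases "p = 0")
  case False
  with assms have "0 < p" "0 < s" by auto
  then have "s - p + p * ln (p / s) = 0 \<longleftrightarrow> ln (s / p) = s / p - 1"
    by (auto simp: KL_term_eq)
  also have "\<dots> \<longleftrightarrow> s / p = 1"
    using \<open>0 < p\<close> \<open>0 < s\<close> by (metis divide_pos_pos ln_eq_minus_one ln_one diff_self)
  finally show ?thesis using \<open>0 < p\<close> by auto
qed (use assms in simp)

lemma KL_pmf_eq_ereal_iff:
  "KL_pmf P R = ereal S \<longleftrightarrow>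
     (\<forall>y. pmf R y = 0 \<longrightarrow> pmf P y = 0) \<and>
     ((\<lambda>y. pmf P y * ln (pmf P y / pmf R y)) has_sum S) UNIV"
proof -
  have "(\<exists>y. pmf P y > 0 \<and> pmf R y = 0) \<longleftrightarrow> \<not> (\<forall>y. pmf R y = 0 \<longrightarrow> pmf P y = 0)"
    by (metis order_less_le pmf_nonneg)
  then show ?thesis
    unfolding KL_pmf_def by (auto intro: infsumI has_sum_infsum dest: has_sum_imp_summable)
qed

lemma KL_pmf_neq_infinity_imp_ereal:
  "KL_pmf P R \<noteq> \<infinity> \<Longrightarrow> \<exists>S. KL_pmf P R = ereal S"
  unfolding KL_pmf_def by (auto split: if_splits)

(* The Gibbs tilt of R with density proportional to exp (C / beta) on A and to 1 off A,
   parametrised by the mass a it gives to A. *)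
definition tilt_pmf :: "'a pmf \<Rightarrow> 'a set \<Rightarrow> real \<Rightarrow> 'a pmf" where
  "tilt_pmf R A a = bind_pmf (bernoulli_pmf a) (\<lambda>b. cond_pmf R (if b then A else - A))"

context
  fixes R :: "'a pmf" and A :: "'a set" and a :: real
  assumes prob_pos: "0 < measure_pmf.prob R A" and prob_less_1: "measure_pmf.prob R A < 1"
    and a_pos: "0 < a" and a_less_1: "a < 1"
begin

lemma pmf_tilt_pmf:
  "pmf (tilt_pmf R A a) y =
     pmf R y * (if y \<in> A then a / measure_pmf.prob R A else (1 - a) / (1 - measure_pmf.prob R A))"
proof -
  have compl: "measure_pmf.prob R (- A) = 1 - measure_pmf.prob R A"
    using measure_pmf.prob_compl[of A R] by (simp add: Compl_eq_Diff_UNIV)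
  have "set_pmf R \<inter> A \<noteq> {}"
    using prob_pos measure_pmf_zero_iff[of R A] by auto
  moreover have "set_pmf R \<inter> - A \<noteq> {}"
    using prob_less_1 measure_pmf_zero_iff[of R "- A"] compl by auto
  ultimately show ?thesis
    unfolding tilt_pmf_def pmf_bind using a_pos a_less_1 by (simp add: pmf_cond compl)
qed

lemma prob_tilt_pmf: "measure_pmf.prob (tilt_pmf R A a) A = a"
proof -
  have "((\<lambda>y. a / measure_pmf.prob R A * (pmf R y * of_bool (y \<in> A))) has_sum
           (a / measure_pmf.prob R A * measure_pmf.prob R A)) UNIV"
    by (intro has_sum_cmult_right has_sum_pmf_indicator)
  moreover have "(\<lambda>y. a / measure_pmf.prob R A * (pmf R y * of_bool (y \<in> A)))
      = (\<lambda>y. pmf (tilt_pmf R A a) y * of_bool (y \<in> A))"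
    by (auto simp: pmf_tilt_pmf)
  ultimately show ?thesis
    using prob_pos has_sum_pmf_indicator[of "tilt_pmf R A a" A] has_sum_unique by fastforce
qed

lemma ln_pmf_tilt_pmf_div:
  assumes "0 < pmf R y"
  shows "ln (pmf (tilt_pmf R A a) y / pmf R y) =
     (if y \<in> A then ln (a / measure_pmf.prob R A) else ln ((1 - a) / (1 - measure_pmf.prob R A)))"
  using assms by (simp add: pmf_tilt_pmf)

lemma KL_pmf_tilt_pmf:
  "KL_pmf (tilt_pmf R A a) R =
     ereal (a * ln (a / measure_pmf.prob R A) + (1 - a) * ln ((1 - a) / (1 - measure_pmf.prob R A)))"
proof -
  let ?T = "tilt_pmf R A a"
  have "(\<lambda>y. pmf ?T y * ln (pmf ?T y / pmf R y)) =
      (\<lambda>y. pmf ?T y * (if y \<in> A then ln (a / measure_pmf.prob R A)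
                       else ln ((1 - a) / (1 - measure_pmf.prob R A))))"
  proof
    fix y
    show "pmf ?T y * ln (pmf ?T y / pmf R y) =
        pmf ?T y * (if y \<in> A then ln (a / measure_pmf.prob R A)
                    else ln ((1 - a) / (1 - measure_pmf.prob R A)))"
      using ln_pmf_tilt_pmf_div[of y] pmf_nonneg[of R y]
      by (cases "pmf R y = 0") (simp_all add: pmf_tilt_pmf)
  qed
  moreover have "\<forall>y. pmf R y = 0 \<longrightarrow> pmf ?T y = 0" by (simp add: pmf_tilt_pmf)
  ultimately show ?thesis
    using has_sum_pmf_step[of ?T A] by (simp add: KL_pmf_eq_ereal_iff prob_tilt_pmf)
qed

(* Chain rule KL(P || R) = KL(P || T) + E_P ln (dT / dR), with KL(P || T) written as a sum of the
   pointwise nonnegative terms T - P + P ln (P / T). *)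
lemma has_sum_KL_term_tilt_pmf:
  assumes "KL_pmf P R = ereal S"
  shows "((\<lambda>y. pmf (tilt_pmf R A a) y - pmf P y + pmf P y * ln (pmf P y / pmf (tilt_pmf R A a) y))
     has_sum (S - (measure_pmf.prob P A * ln (a / measure_pmf.prob R A)
                   + (1 - measure_pmf.prob P A) * ln ((1 - a) / (1 - measure_pmf.prob R A))))) UNIV"
proof -
  let ?T = "tilt_pmf R A a"
  let ?ln_ratio = "\<lambda>y. if y \<in> A then ln (a / measure_pmf.prob R A)
                       else ln ((1 - a) / (1 - measure_pmf.prob R A))"
  have abs_cont: "pmf R y = 0 \<Longrightarrow> pmf P y = 0" for y
    using assms by (simp add: KL_pmf_eq_ereal_iff)
  have KL: "((\<lambda>y. pmf P y * ln (pmf P y / pmf R y)) has_sum S) UNIV"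
    using assms by (simp add: KL_pmf_eq_ereal_iff)
  have split: "pmf ?T y - pmf P y + pmf P y * ln (pmf P y / pmf ?T y) =
      pmf P y * ln (pmf P y / pmf R y) - (pmf P y - pmf ?T y) - pmf P y * ?ln_ratio y" for y
  proof (cases "pmf P y = 0")
    case False
    then have P: "0 < pmf P y" and R: "0 < pmf R y"
      using abs_cont pmf_nonneg order_le_less by metis+
    then have T: "0 < pmf ?T y"
      using a_pos a_less_1 prob_pos prob_less_1 by (simp add: pmf_tilt_pmf)
    have "ln (pmf P y / pmf R y) = ln (pmf P y / pmf ?T y) + ln (pmf ?T y / pmf R y)"
      using P R T by (simp add: ln_div)
    then show ?thesis using ln_pmf_tilt_pmf_div[OF R] by (simp add: algebra_simps)
  qed simp
  have "((\<lambda>y. pmf P y * ln (pmf P y / pmf R y) - (pmf P y - pmf ?T y) - pmf P y * ?ln_ratio y)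
      has_sum (S - (1 - 1) - (measure_pmf.prob P A * ln (a / measure_pmf.prob R A)
                   + (1 - measure_pmf.prob P A) * ln ((1 - a) / (1 - measure_pmf.prob R A))))) UNIV"
    by (intro has_sum_diff KL has_sum_pmf_UNIV has_sum_pmf_step)
  then show ?thesis by (simp add: split)
qed

lemma tilt_pmf_eq_if_KL_pmf_le:
  assumes "KL_pmf P R = ereal S"
    and "S \<le> measure_pmf.prob P A * ln (a / measure_pmf.prob R A)
             + (1 - measure_pmf.prob P A) * ln ((1 - a) / (1 - measure_pmf.prob R A))"
  shows "P = tilt_pmf R A a"
proof -
  let ?T = "tilt_pmf R A a"
  have supp: "0 < pmf ?T y" if "0 < pmf P y" for y
    using assms(1) that pmf_nonneg[of R y] a_pos a_less_1 prob_pos prob_less_1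
    by (fastforce simp: KL_pmf_eq_ereal_iff pmf_tilt_pmf order_le_less)
  have term_nonneg: "0 \<le> pmf ?T y - pmf P y + pmf P y * ln (pmf P y / pmf ?T y)" for y
    using supp by (intro KL_term_nonneg) auto
  have "pmf ?T y - pmf P y + pmf P y * ln (pmf P y / pmf ?T y) = 0" for y
    using nonneg_has_sum_le_0D[OF has_sum_KL_term_tilt_pmf[OF assms(1)]] assms(2) term_nonneg
    by simp
  then have "pmf P y = pmf ?T y" for y
    using KL_term_eq_0_iff[of "pmf P y" "pmf ?T y"] supp by simp
  then show ?thesis by (rule pmf_eqI)
qed

end

lemma log_odds_shift:
  fixes pr u :: real
  assumes "0 < pr" "pr < 1"
  defines "a \<equiv> 1 / (1 + (1 - pr) / pr * exp (- u))"
  shows "0 < a" "a < 1" "ln (a / pr) - ln ((1 - a) / (1 - pr)) = u"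
proof -
  define K where "K = (1 - pr) / pr * exp (- u)"
  have K: "0 < K" using assms(1,2) by (simp add: K_def)
  then show a: "0 < a" "a < 1" unfolding a_def K_def[symmetric] by simp_all
  have "1 - a = K * a" unfolding a_def K_def[symmetric] using K by (simp add: field_simps)
  then have "(a / pr) / ((1 - a) / (1 - pr)) = (a / pr) / (K * a / (1 - pr))" by simp
  also have "\<dots> = (1 - pr) / (pr * K)" using assms(1,2) K a by (simp add: field_simps)
  also have "\<dots> = exp u" using assms(1,2) by (simp add: K_def exp_minus field_simps)
  finally have "(a / pr) / ((1 - a) / (1 - pr)) = exp u" .
  moreover have "ln ((a / pr) / ((1 - a) / (1 - pr))) = ln (a / pr) - ln ((1 - a) / (1 - pr))"
    using assms(1,2) a by (intro ln_divide_pos) auto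
  ultimately show "ln (a / pr) - ln ((1 - a) / (1 - pr)) = u" by simp
qed

lemma gibbs_maximizer_prob:
  fixes R P :: "'a pmf" and A :: "'a set" and C D beta :: real
  assumes beta: "0 < beta"
    and prob_pos: "0 < measure_pmf.prob R A" and prob_less_1: "measure_pmf.prob R A < 1"
    and maximal: "\<And>P'. ereal (C * measure_pmf.prob P' A + D) - ereal beta * KL_pmf P' R
                       \<le> ereal (C * measure_pmf.prob P A + D) - ereal beta * KL_pmf P R"
  shows "measure_pmf.prob P A =
     1 / (1 + (1 - measure_pmf.prob R A) / measure_pmf.prob R A * exp (- C / beta))"
proof -
  define pr where "pr = measure_pmf.prob R A"
  define a where "a = 1 / (1 + (1 - pr) / pr * exp (- (C / beta)))"
  define L1 where "L1 = ln (a / pr)"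
  define L0 where "L0 = ln ((1 - a) / (1 - pr))"
  have pr: "0 < pr" "pr < 1" using prob_pos prob_less_1 by (simp_all add: pr_def)
  note odds = log_odds_shift[OF pr, of "C / beta", folded a_def]
  have a: "0 < a" "a < 1" using odds(1,2) .
  have C_eq: "C = beta * (L1 - L0)" using odds(3) beta by (simp add: L1_def L0_def)
  \<comment> \<open>the affine part of the objective cancels against the tilt, leaving \<open>- beta KL(P || T)\<close>\<close>
  have objective_eq: "C * x + D - beta * (x * L1 + (1 - x) * L0) = D - beta * L0" for x
    unfolding C_eq by (simp add: algebra_simps)
  let ?T = "tilt_pmf R A a"
  let ?m = "measure_pmf.prob P A"
  have "ereal (C * a + D - beta * (a * L1 + (1 - a) * L0))
      \<le> ereal (C * ?m + D) - ereal beta * KL_pmf P R"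
    using maximal[of ?T] prob_pos prob_less_1 a
    by (simp add: prob_tilt_pmf KL_pmf_tilt_pmf L1_def L0_def pr_def)
  moreover from this have "KL_pmf P R \<noteq> \<infinity>" using beta by auto
  then obtain S where S: "KL_pmf P R = ereal S" using KL_pmf_neq_infinity_imp_ereal by blast
  ultimately have "C * a + D - beta * (a * L1 + (1 - a) * L0) \<le> C * ?m + D - beta * S"
    by simp
  then have "beta * S \<le> beta * (?m * L1 + (1 - ?m) * L0)"
    using objective_eq[of a] objective_eq[of ?m] by linarith
  then have "S \<le> ?m * L1 + (1 - ?m) * L0" using beta by simp
  then have "P = ?T"
    using tilt_pmf_eq_if_KL_pmf_le[OF prob_pos prob_less_1 a S] by (simp add: L1_def L0_def pr_def)
  then show ?thesis
    using prob_tilt_pmf[OF prob_pos prob_less_1 a] by (simp add: a_def pr_def)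
qed

lemma succ_prob_maximizer_eq_h_noisy:
  fixes r :: "'q \<Rightarrow> 'o \<Rightarrow> bool" and R P :: "'o pmf" and rp rm beta eps p0 :: real
  assumes beta: "0 < beta"
    and pref: "0 < succ_prob r q R" "succ_prob r q R < 1"
    and maximal: "\<And>P'.
       ereal ((1 - rp - rm) * (succ_prob r q P' - p0)
              / sqrt (noisy_mean rp rm p0 * (1 - noisy_mean rp rm p0) + eps))
         - ereal beta * KL_pmf P' R
       \<le> ereal ((1 - rp - rm) * (succ_prob r q P - p0)
              / sqrt (noisy_mean rp rm p0 * (1 - noisy_mean rp rm p0) + eps))
         - ereal beta * KL_pmf P R"
  shows "succ_prob r q P = h_noisy rp rm beta eps (succ_prob r q R) p0"
proof -
  define A where "A = {y. r q y}"
  define s where "s = sqrt (noisy_mean rp rm p0 * (1 - noisy_mean rp rm p0) + eps)"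
  define g where "g = 1 - rp - rm"
  define C where "C = g / s"
  have prob_A: "succ_prob r q Q = measure_pmf.prob Q A" for Q
    unfolding A_def by (rule succ_prob_eq_prob)
  have affine: "g * (x - p0) / s = C * x + - C * p0" for x
    unfolding C_def by (simp add: right_diff_distrib diff_divide_distrib)
  have "measure_pmf.prob P A =
      1 / (1 + (1 - measure_pmf.prob R A) / measure_pmf.prob R A * exp (- C / beta))"
  proof (rule gibbs_maximizer_prob[OF beta])
    show "0 < measure_pmf.prob R A" "measure_pmf.prob R A < 1"
      using pref by (simp_all add: prob_A)
    show "ereal (C * measure_pmf.prob P' A + - C * p0) - ereal beta * KL_pmf P' R
        \<le> ereal (C * measure_pmf.prob P A + - C * p0) - ereal beta * KL_pmf P R" for P'
      using maximal[of P'] unfolding s_def[symmetric] g_def[symmetric] affine prob_A .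
  qed
  then show ?thesis
    unfolding h_noisy_def s_def[symmetric] g_def[symmetric] prob_A
    by (simp add: C_def mult.commute)
qed

section \<open>The update maps and their fixed points\<close>

lemma greatest_fixed_point_exists:
  fixes h :: "real \<Rightarrow> real"
  assumes "a \<le> b" "continuous_on {a..b} h" "h ` {a..b} \<subseteq> {a..b}"
  shows "\<exists>x\<in>{a..b}. h x = x \<and> (\<forall>y\<in>{a..b}. h y = y \<longrightarrow> y \<le> x)"
proof -
  let ?F = "{x \<in> {a..b}. h x - x = 0}"
  have cont: "continuous_on {a..b} (\<lambda>x. h x - x)" by (intro continuous_intros assms(2))
  then have "closed ?F" by (intro continuous_closed_preimage_constant) auto
  then have "compact ?F"
    unfolding compact_eq_bounded_closed by (auto intro: bounded_subset[of "{a..b}"])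
  moreover have "a \<le> h a" "h b \<le> b" using assms(1,3) by (auto simp: image_subset_iff)
  then have "?F \<noteq> {}"
    using IVT2'[of "\<lambda>x. h x - x" b 0 a, OF _ _ assms(1) cont] by auto
  ultimately obtain x where "x \<in> ?F" "\<forall>y\<in>?F. y \<le> x"
    using compact_attains_sup by blast
  then show ?thesis by auto
qed

lemma fixed_point_above:
  fixes h :: "real \<Rightarrow> real"
  assumes "x \<le> b" "continuous_on {x..b} h" "x < h x" "h b \<le> b"
  shows "\<exists>y. x < y \<and> y \<le> b \<and> h y = y"
proof -
  have "continuous_on {x..b} (\<lambda>t. h t - t)" by (intro continuous_intros assms(2))
  then obtain y where "x \<le> y" "y \<le> b" "h y - y = 0"
    using IVT2'[of "\<lambda>t. h t - t" b 0 x] assms by auto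
  moreover have "y \<noteq> x" using assms(3) \<open>h y - y = 0\<close> by auto
  ultimately have "x < y \<and> y \<le> b \<and> h y = y" by simp
  then show ?thesis by blast
qed

lemma div_one_plus_mult_exp_bounds:
  fixes K u :: real
  assumes "0 < K"
  shows "1 / (1 + K * exp u) \<in> {0<..<1}"
  using assms by (simp add: add_pos_pos)

lemma div_one_plus_mult_exp_strict_antimono:
  fixes K u v :: real
  assumes "0 < K" "u < v"
  shows "1 / (1 + K * exp v) < 1 / (1 + K * exp u)"
  using assms by (intro divide_strict_left_mono) (simp_all add: add_pos_pos)

lemma noisy_mean_bounds:
  fixes rp rm p :: real
  assumes "0 \<le> rp" "0 \<le> rm" "0 \<le> 1 - rp - rm" "p \<in> {0..1}"
  shows "noisy_mean rp rm p \<in> {0..1}"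
proof -
  have "(1 - rp - rm) * p \<le> 1 - rp - rm" "0 \<le> (1 - rp - rm) * p"
    using assms by (simp_all add: mult_left_le)
  then show ?thesis unfolding noisy_mean_def using assms by auto
qed

lemma noisy_mean_variance:
  "noisy_mean rp rm p * (1 - noisy_mean rp rm p) =
     (1 - rp - rm)\<^sup>2 * (p * (1 - p)) + (rp * rm + (1 - rp - rm) * (rp * (1 - p) + rm * p))"
  by (simp add: noisy_mean_def algebra_simps power2_eq_square)

lemma sqrt_variance_pos:
  fixes x eps :: real
  assumes "x \<in> {0..1}" "0 < eps"
  shows "0 < sqrt (x * (1 - x) + eps)"
proof -
  have "0 \<le> x * (1 - x)" using assms(1) by simp
  then show ?thesis using assms(2) by simp
qed

lemma sqrt_noisy_variance_gt:
  fixes rp rm eps p :: real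
  assumes "0 < eps" "0 \<le> rp" "0 \<le> rm" "0 < 1 - rp - rm" "0 < rp + rm" "p \<in> {0..1}"
  shows "(1 - rp - rm) * sqrt (p * (1 - p) + eps)
           < sqrt (noisy_mean rp rm p * (1 - noisy_mean rp rm p) + eps)"
proof -
  define g where "g = 1 - rp - rm"
  have g: "0 < g" "g < 1" using assms(4,5) by (simp_all add: g_def)
  have "g\<^sup>2 * (p * (1 - p)) \<le> noisy_mean rp rm p * (1 - noisy_mean rp rm p)"
    unfolding noisy_mean_variance g_def[symmetric] using assms g by simp
  moreover have "g\<^sup>2 * eps < eps" using g assms(1) by (simp add: power_less_one_iff)
  ultimately have "sqrt (g\<^sup>2 * (p * (1 - p) + eps))
      < sqrt (noisy_mean rp rm p * (1 - noisy_mean rp rm p) + eps)"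
    by (simp add: algebra_simps)
  then show ?thesis using g by (simp add: real_sqrt_mult g_def)
qed

lemma h_noisy_less_h_clean:
  fixes rp rm beta eps pr p :: real
  assumes beta: "0 < beta" and eps: "0 < eps" and rp: "0 \<le> rp" and rm: "0 \<le> rm"
    and gap: "0 < 1 - rp - rm" and noise: "0 < rp + rm" and pr: "0 < pr" "pr < 1"
    and p: "p \<in> {0..1}"
  shows "h_noisy rp rm beta eps pr p < h_clean beta eps pr p"
proof -
  define g where "g = 1 - rp - rm"
  define sc where "sc = sqrt (p * (1 - p) + eps)"
  define sn where "sn = sqrt (noisy_mean rp rm p * (1 - noisy_mean rp rm p) + eps)"
  have sc: "0 < sc" unfolding sc_def using p eps by (rule sqrt_variance_pos)
  have less: "g * sc < sn"
    using sqrt_noisy_variance_gt[OF eps rp rm gap noise p] by (simp add: g_def sc_def sn_def)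
  moreover have "0 < g * sc" using gap sc by (simp add: g_def)
  then have "0 < sn" using less by linarith
  ultimately have "g / (beta * sn) < 1 / (beta * sc)"
    using beta sc by (simp add: field_simps)
  then have "- 1 / (beta * sc) < - g / (beta * sn)" by simp
  from div_one_plus_mult_exp_strict_antimono[OF _ this, of "(1 - pr) / pr"] pr show ?thesis
    unfolding h_noisy_def h_clean_def g_def[symmetric] sc_def[symmetric] sn_def[symmetric] by simp
qed

lemma h_noisy_bounds:
  "0 < pr \<Longrightarrow> pr < 1 \<Longrightarrow> h_noisy rp rm beta eps pr p \<in> {0..1}"
  unfolding h_noisy_def using div_one_plus_mult_exp_bounds[of "(1 - pr) / pr"] by fastforce

lemma h_clean_bounds:
  "0 < pr \<Longrightarrow> pr < 1 \<Longrightarrow> h_clean beta eps pr p \<in> {0..1}"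
  unfolding h_clean_def using div_one_plus_mult_exp_bounds[of "(1 - pr) / pr"] by fastforce

lemma continuous_on_h_noisy:
  assumes "0 < eps" "0 \<le> rp" "0 \<le> rm" "0 \<le> 1 - rp - rm" "0 < pr" "pr < 1" "0 < beta"
  shows "continuous_on {0..1} (h_noisy rp rm beta eps pr)"
proof -
  have "sqrt (noisy_mean rp rm p * (1 - noisy_mean rp rm p) + eps) \<noteq> 0" if "p \<in> {0..1}" for p
    using sqrt_variance_pos[OF noisy_mean_bounds[OF assms(2-4) that] assms(1)] by simp
  moreover have "1 + (1 - pr) / pr * exp u \<noteq> 0" for u
  proof -
    have "0 < (1 - pr) / pr * exp u" using assms(5,6) by simp
    then show ?thesis by linarith
  qed
  moreover have "continuous_on {0..1} (noisy_mean rp rm)"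
    unfolding noisy_mean_def by (intro continuous_intros)
  ultimately show ?thesis
    unfolding h_noisy_def using assms(7) by (intro continuous_intros) auto
qed

lemma continuous_on_h_clean:
  assumes "0 < eps" "0 < pr" "pr < 1" "0 < beta"
  shows "continuous_on {0..1} (h_clean beta eps pr)"
proof -
  have "sqrt (p * (1 - p) + eps) \<noteq> 0" if "p \<in> {0..1}" for p
    using sqrt_variance_pos[OF that assms(1)] by simp
  moreover have "1 + (1 - pr) / pr * exp u \<noteq> 0" for u
  proof -
    have "0 < (1 - pr) / pr * exp u" using assms(2,3) by simp
    then show ?thesis by linarith
  qed
  ultimately show ?thesis
    unfolding h_clean_def using assms(4) by (intro continuous_intros) auto
qed

lemma greatest_fixed_point_h_noisy_less:
  fixes rp rm beta eps pr :: real
  assumes beta: "0 < beta" and eps: "0 < eps" and rp: "0 \<le> rp" and rm: "0 \<le> rm"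
    and gap: "0 < 1 - rp - rm" and noise: "0 < rp + rm" and pr: "0 < pr" "pr < 1"
  shows "\<exists>pt ph. pt \<in> {0..1} \<and> ph \<in> {0..1}
     \<and> h_noisy rp rm beta eps pr pt = pt
     \<and> (\<forall>p\<in>{0..1}. h_noisy rp rm beta eps pr p = p \<longrightarrow> p \<le> pt)
     \<and> h_clean beta eps pr ph = ph
     \<and> (\<forall>p\<in>{0..1}. h_clean beta eps pr p = p \<longrightarrow> p \<le> ph)
     \<and> pt < ph"
proof -
  have cont_noisy: "continuous_on {0..1} (h_noisy rp rm beta eps pr)"
    using continuous_on_h_noisy eps rp rm gap pr beta by simp
  have cont_clean: "continuous_on {0..1} (h_clean beta eps pr)"
    using continuous_on_h_clean eps pr beta by simp
  have "h_noisy rp rm beta eps pr ` {0..1} \<subseteq> {0..1}" using h_noisy_bounds[OF pr] by blast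
  then obtain pt where pt: "pt \<in> {0..1}" "h_noisy rp rm beta eps pr pt = pt"
      "\<forall>p\<in>{0..1}. h_noisy rp rm beta eps pr p = p \<longrightarrow> p \<le> pt"
    using greatest_fixed_point_exists[OF zero_le_one cont_noisy] by blast
  have "h_clean beta eps pr ` {0..1} \<subseteq> {0..1}" using h_clean_bounds[OF pr] by blast
  then obtain ph where ph: "ph \<in> {0..1}" "h_clean beta eps pr ph = ph"
      "\<forall>p\<in>{0..1}. h_clean beta eps pr p = p \<longrightarrow> p \<le> ph"
    using greatest_fixed_point_exists[OF zero_le_one cont_clean] by blast
  have "pt < h_clean beta eps pr pt"
    using h_noisy_less_h_clean[OF beta eps rp rm gap noise pr pt(1)] pt(2) by simp
  moreover have "continuous_on {pt..1} (h_clean beta eps pr)"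
    using cont_clean by (rule continuous_on_subset) (use pt(1) in auto)
  moreover have "h_clean beta eps pr 1 \<le> 1" using h_clean_bounds[OF pr, where p = 1] by simp
  moreover have "pt \<le> 1" using pt(1) by simp
  ultimately obtain x where x: "pt < x" "x \<le> 1" "h_clean beta eps pr x = x"
    using fixed_point_above by blast
  then have "x \<le> ph" using ph(3) pt(1) by simp
  then have "pt < ph" using x(1) by linarith
  then show ?thesis using pt ph by blast
qed

theorem theorem4:
  fixes r :: "'q \<Rightarrow> 'o::countable \<Rightarrow> bool"
    and q :: 'q
    and rho_p rho_m :: "'q \<Rightarrow> real"
    and pi_ref :: "'q \<Rightarrow> 'o pmf"
    and pi :: "nat \<Rightarrow> 'q \<Rightarrow> 'o pmf"
    and beta eps :: real
  assumes beta: "beta > 0" and eps: "eps > 0"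
    and rho_p: "0 \<le> rho_p q" "rho_p q \<le> 1"
    and rho_m: "0 \<le> rho_m q" "rho_m q \<le> 1"
    and gap: "1 - rho_p q - rho_m q > 0"
    and pref: "0 < succ_prob r q (pi_ref q)" "succ_prob r q (pi_ref q) < 1"
    and opt: "\<And>k (P :: 'o pmf). k \<ge> 1 \<Longrightarrow>
       ereal ((1 - rho_p q - rho_m q) * (succ_prob r q P - succ_prob r q (pi (k - 1) q))
              / sqrt (noisy_mean (rho_p q) (rho_m q) (succ_prob r q (pi (k - 1) q))
                      * (1 - noisy_mean (rho_p q) (rho_m q) (succ_prob r q (pi (k - 1) q))) + eps))
         - ereal beta * KL_pmf P (pi_ref q)
       \<le> ereal ((1 - rho_p q - rho_m q) * (succ_prob r q (pi k q) - succ_prob r q (pi (k - 1) q))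
              / sqrt (noisy_mean (rho_p q) (rho_m q) (succ_prob r q (pi (k - 1) q))
                      * (1 - noisy_mean (rho_p q) (rho_m q) (succ_prob r q (pi (k - 1) q))) + eps))
         - ereal beta * KL_pmf (pi k q) (pi_ref q)"
  shows "(\<forall>k\<ge>1. succ_prob r q (pi k q)
            = h_noisy (rho_p q) (rho_m q) beta eps (succ_prob r q (pi_ref q)) (succ_prob r q (pi (k - 1) q)))
       \<and> (rho_p q + rho_m q > 0 \<longrightarrow>
            (\<forall>p\<in>{0..1}. h_noisy (rho_p q) (rho_m q) beta eps (succ_prob r q (pi_ref q)) p
                         < h_clean beta eps (succ_prob r q (pi_ref q)) p)
          \<and> (\<exists>pt ph. pt \<in> {0..1} \<and> ph \<in> {0..1}
               \<and> h_noisy (rho_p q) (rho_m q) beta eps (succ_prob r q (pi_ref q)) pt = pt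
               \<and> (\<forall>p\<in>{0..1}. h_noisy (rho_p q) (rho_m q) beta eps (succ_prob r q (pi_ref q)) p = p \<longrightarrow> p \<le> pt)
               \<and> h_clean beta eps (succ_prob r q (pi_ref q)) ph = ph
               \<and> (\<forall>p\<in>{0..1}. h_clean beta eps (succ_prob r q (pi_ref q)) p = p \<longrightarrow> p \<le> ph)
               \<and> pt < ph))"
proof -
  have "succ_prob r q (pi k q) = h_noisy (rho_p q) (rho_m q) beta eps (succ_prob r q (pi_ref q))
          (succ_prob r q (pi (k - 1) q))" if "k \<ge> 1" for k
    using opt[OF that] by (rule succ_prob_maximizer_eq_h_noisy[OF beta pref])
  then show ?thesis
    using h_noisy_less_h_clean[OF beta eps rho_p(1) rho_m(1) gap _ pref]
      greatest_fixed_point_h_noisy_less[OF beta eps rho_p(1) rho_m(1) gap _ pref]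
    by blast
qed

end
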